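(* Let $n\ge2$ and let $\tau=(\tau^1,\dots,\tau^n)$ be an $\mathbf R^n$-valued random variable taking exactly $n+1$ distinct values, each with positive probability, such that $\mathbf E[\tau^i]=0$ for $i=1,\dots,n$ and $\mathbf E[\tau^i\tau^j]=\delta_{ij}$ for $i,j=1,\dots,n$. Then there exists $(i,j,k)\in\{1,\dots,n\}^3$ with $\mathbf E[\tau^i\tau^j\tau^k]\ne0$. *)

theory Defs
  imports "HOL-Probability.Probability"
begin

end

theory Submission
  imports Defs
begin

text \<open>Write \<open>S\<close> for the set of atoms of \<open>\<tau>\<close> and \<open>p\<close> for their weights, and assume all
  third moments vanish. Zero mean and identity covariance say that the \<open>(n+1) \<times> (n+1)\<close>
  matrix with rows \<open>sqrt p\<close>, \<open>sqrt p v\<^sub>1\<close>, ..., \<open>sqrt p v\<^sub>n\<close> has orthonormal rows, hence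
  orthonormal columns: \<open>p r (1 + s \<bullet> r) = \<delta>\<^sub>r\<^sub>s\<close> for atoms \<open>r, s\<close>. (Without matrices: the
  coefficients \<open>p r (1 + s \<bullet> r) - \<delta>\<^sub>r\<^sub>s\<close> have zero sum and zero barycentre, and the
  \<open>n + 1\<close> atoms are affinely independent since they lie on no affine hyperplane.)
  So distinct atoms satisfy \<open>s \<bullet> r = -1\<close> and \<open>p s (1 + |s|\<^sup>2) = 1\<close>, and the third moment
  in the direction of an atom \<open>s\<close> is \<open>p s |s|\<^sup>2 (|s|\<^sup>4 - 1)\<close>. Its vanishing forces \<open>|s| = 1\<close>
  and \<open>p s = 1/2\<close> for every atom, so there are only two atoms, contradicting \<open>n \<ge> 2\<close>.\<close>

lemma integral_finite_range:
  fixes \<tau> :: "'a \<Rightarrow> 'b::metric_space" and f :: "'b \<Rightarrow> real"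
  assumes "finite_measure M" "\<tau> \<in> borel_measurable M" "finite (\<tau> ` space M)"
  shows "(\<integral>\<omega>. f (\<tau> \<omega>) \<partial>M) = (\<Sum>v\<in>\<tau> ` space M. measure M {\<omega>\<in>space M. \<tau> \<omega> = v} * f v)"
proof -
  interpret finite_measure M by fact
  let ?A = "\<lambda>v. {\<omega>\<in>space M. \<tau> \<omega> = v}"
  have "?A v \<in> sets M" for v
    using assms(2) by measurable
  then have "has_bochner_integral M (\<lambda>\<omega>. \<Sum>v\<in>\<tau> ` space M. indicator (?A v) \<omega> * f v)
      (\<Sum>v\<in>\<tau> ` space M. measure M (?A v) * f v)"
    by (intro has_bochner_integral_sum has_bochner_integral_mult_left
        has_bochner_integral_real_indicator) (auto simp: less_top[symmetric])
  moreover have "(\<Sum>v\<in>\<tau> ` space M. indicator (?A v) \<omega> * f v) = f (\<tau> \<omega>)"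
    if "\<omega> \<in> space M" for \<omega>
    using that assms(3) by (simp add: indicator_def if_distrib sum.If_cases)
  ultimately show ?thesis
    by (metis (no_types, lifting) Bochner_Integration.integral_cong has_bochner_integral_integral_eq)
qed

lemma sum_mult_inner_cart:
  fixes a :: "real ^ 'n"
  shows "(\<Sum>v\<in>S. w v * (a \<bullet> v)) = (\<Sum>i\<in>UNIV. a $ i * (\<Sum>v\<in>S. w v * v $ i))"
  by (simp add: inner_vec_def sum_distrib_left sum.swap[of _ S] mult.assoc mult.left_commute)

lemma sum_mult_inner_cart_eq_zero:
  fixes a :: "real ^ 'n"
  assumes "\<And>i. (\<Sum>v\<in>S. w v * v $ i) = 0"
  shows "(\<Sum>v\<in>S. w v * (a \<bullet> v)) = 0"
  by (simp add: sum_mult_inner_cart assms)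

lemma isotropic_cart:
  fixes a b :: "real ^ 'n"
  assumes "\<And>i j. (\<Sum>v\<in>S. p v * (v $ i * v $ j)) = (if i = j then 1 else 0)"
  shows "(\<Sum>v\<in>S. p v * (a \<bullet> v) * (b \<bullet> v)) = a \<bullet> b"
proof -
  have "(\<Sum>v\<in>S. p v * v $ i * (a \<bullet> v)) = a $ i" for i
  proof -
    have "(\<Sum>v\<in>S. p v * v $ i * (a \<bullet> v)) = (\<Sum>j\<in>UNIV. a $ j * (\<Sum>v\<in>S. p v * v $ i * v $ j))"
      by (rule sum_mult_inner_cart)
    also have "\<dots> = (\<Sum>j\<in>UNIV. a $ j * (if i = j then 1 else 0))"
      using assms by (simp add: mult.assoc)
    finally show ?thesis
      by (simp add: if_distrib cong: if_cong)
  qed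
  then have "(\<Sum>v\<in>S. p v * (a \<bullet> v) * (b \<bullet> v)) = (\<Sum>i\<in>UNIV. b $ i * a $ i)"
    by (subst sum_mult_inner_cart) (simp add: mult.commute mult.left_commute)
  then show ?thesis
    by (simp add: inner_vec_def mult.commute)
qed

lemma third_moment_cart_eq_zero:
  fixes a :: "real ^ 'n"
  assumes "\<And>i j k. (\<Sum>v\<in>S. p v * (v $ i * v $ j * v $ k)) = 0"
  shows "(\<Sum>v\<in>S. p v * (a \<bullet> v) ^ 3) = 0"
proof -
  have "(\<Sum>v\<in>S. p v * v $ i * v $ j * (a \<bullet> v)) = 0" for i j
    using assms by (intro sum_mult_inner_cart_eq_zero) (simp add: mult.assoc)
  then have "(\<Sum>v\<in>S. p v * v $ i * (a \<bullet> v) * (a \<bullet> v)) = 0" for i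
    by (intro sum_mult_inner_cart_eq_zero) (simp add: mult.commute mult.left_commute)
  then have "(\<Sum>v\<in>S. p v * (a \<bullet> v) * (a \<bullet> v) * (a \<bullet> v)) = 0"
    by (intro sum_mult_inner_cart_eq_zero) (simp add: mult.commute mult.left_commute)
  then show ?thesis
    by (simp add: power3_eq_cube mult.assoc)
qed

locale isotropic_weights =
  fixes S :: "'a::euclidean_space set" and p :: "'a \<Rightarrow> real"
  assumes finite_support: "finite S"
    and weight_pos: "v \<in> S \<Longrightarrow> p v > 0"
    and sum_weight: "sum p S = 1"
    and centered: "(\<Sum>v\<in>S. p v * (a \<bullet> v)) = 0"
    and isotropic: "(\<Sum>v\<in>S. p v * (a \<bullet> v) * (b \<bullet> v)) = a \<bullet> b"
begin

lemma inner_constant_on_support_imp_zero: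
  assumes "\<And>v. v \<in> S \<Longrightarrow> a \<bullet> v = c"
  shows "a = 0"
proof -
  have "c = (\<Sum>v\<in>S. p v * (a \<bullet> v))"
    using assms by (simp add: sum_weight flip: sum_distrib_right)
  then have "c = 0"
    by (simp add: centered)
  then have "a \<bullet> a = 0"
    using isotropic[of a a] assms by simp
  then show ?thesis
    by simp
qed

lemma aff_dim_support: "aff_dim S = DIM('a)"
proof (rule ccontr)
  assume "aff_dim S \<noteq> DIM('a)"
  then have "aff_dim S < DIM('a)"
    using aff_dim_le_DIM[of S] by simp
  then obtain a c where "a \<noteq> 0" "S \<subseteq> {x. a \<bullet> x = c}"
    by (rule aff_lowdim_subset_hyperplane)
  then show False
    using inner_constant_on_support_imp_zero by blast
qed

lemma affine_independent_support:
  assumes "card S = DIM('a) + 1"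
  shows "\<not> affine_dependent S"
  using assms by (simp add: affine_independent_iff_card finite_support aff_dim_support)

lemma sum_weight_scaleR: "(\<Sum>v\<in>S. p v *\<^sub>R v) = 0"
proof (rule euclidean_eqI)
  show "(\<Sum>v\<in>S. p v *\<^sub>R v) \<bullet> b = 0 \<bullet> b" for b
    unfolding inner_sum_left using centered[of b] by (simp add: inner_commute[of _ b])
qed

lemma sum_weight_inner_scaleR: "(\<Sum>v\<in>S. (p v * (a \<bullet> v)) *\<^sub>R v) = a"
proof (rule euclidean_eqI)
  show "(\<Sum>v\<in>S. (p v * (a \<bullet> v)) *\<^sub>R v) \<bullet> b = a \<bullet> b" for b
    unfolding inner_sum_left using isotropic[of a b] by (simp add: inner_commute[of _ b])
qed

lemma weight_mult_one_plus_inner: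
  assumes "card S = DIM('a) + 1" "s \<in> S" "r \<in> S"
  shows "p r * (1 + s \<bullet> r) = (if r = s then 1 else 0)"
proof -
  define c where "c r = p r * (1 + s \<bullet> r) - (if r = s then 1 else 0)" for r
  have "sum c S = 0"
    using assms(2) finite_support
    by (simp add: c_def distrib_left sum.distrib sum_subtractf sum_weight centered)
  moreover have "(\<Sum>r\<in>S. c r *\<^sub>R r) = 0"
    using assms(2) finite_support
    by (simp add: c_def algebra_simps sum.distrib sum_subtractf sum_weight_scaleR
        sum_weight_inner_scaleR if_distrib[of "\<lambda>x. x *\<^sub>R _"] if_distrib[of "\<lambda>x. x * _"] cong: if_cong)
  ultimately have "c r = 0"
    using affine_independent_support[OF assms(1)] assms(3)
    by (auto simp: affine_dependent_explicit_finite finite_support)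
  then show ?thesis
    by (simp add: c_def)
qed

lemma inner_distinct_support_points:
  assumes "card S = DIM('a) + 1" "s \<in> S" "r \<in> S" "r \<noteq> s"
  shows "s \<bullet> r = -1"
  using weight_mult_one_plus_inner[OF assms(1-3)] weight_pos[OF assms(3)] assms(4) by simp

lemma third_moment_at_support_point:
  assumes "card S = DIM('a) + 1" "s \<in> S"
  shows "(\<Sum>v\<in>S. p v * (s \<bullet> v) ^ 3) = p s * (s \<bullet> s) * ((s \<bullet> s)\<^sup>2 - 1)"
proof -
  have norm: "p s * (1 + s \<bullet> s) = 1"
    using weight_mult_one_plus_inner[OF assms(1,2,2)] by simp
  have "(\<Sum>v\<in>S. p v * (s \<bullet> v) ^ 3) = p s * (s \<bullet> s) ^ 3 + (\<Sum>r\<in>S - {s}. p r * (s \<bullet> r) ^ 3)"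
    using finite_support assms(2) by (simp add: sum.remove)
  also have "(\<Sum>r\<in>S - {s}. p r * (s \<bullet> r) ^ 3) = - (\<Sum>r\<in>S - {s}. p r)"
    using inner_distinct_support_points[OF assms] by (simp add: sum_negf[symmetric])
  also have "(\<Sum>r\<in>S - {s}. p r) = 1 - p s"
    using finite_support assms(2) sum_weight by (simp add: sum_diff1)
  also have "1 - p s = p s * (s \<bullet> s)"
    using norm by (simp add: algebra_simps)
  finally show ?thesis
    by (simp add: algebra_simps power2_eq_square power3_eq_cube)
qed

lemma exists_nonzero_third_moment:
  assumes "card S = DIM('a) + 1" "DIM('a) \<ge> 2"
  shows "\<exists>a. (\<Sum>v\<in>S. p v * (a \<bullet> v) ^ 3) \<noteq> 0"
proof (rule ccontr)
  assume "\<nexists>a. (\<Sum>v\<in>S. p v * (a \<bullet> v) ^ 3) \<noteq> 0"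
  then have third: "p s * (s \<bullet> s) * ((s \<bullet> s)\<^sup>2 - 1) = 0" if "s \<in> S" for s
    using third_moment_at_support_point[OF assms(1) that] by simp
  have "p s = 1 / 2" if "s \<in> S" for s
  proof -
    have "card (S - {s}) \<ge> 2"
      using assms that finite_support by simp
    then obtain r where "r \<in> S" "r \<noteq> s"
      by (metis Diff_iff all_not_in_conv card.empty insertCI not_numeral_le_zero)
    then have "s \<noteq> 0"
      using inner_distinct_support_points[OF assms(1) that] by force
    then have norm_pos: "s \<bullet> s > 0"
      by simp
    moreover have "p s > 0"
      using weight_pos that by simp
    ultimately have "(s \<bullet> s)\<^sup>2 = 1"
      using third[OF that] by simp
    then have "s \<bullet> s = 1"
      using norm_pos by (auto simp: power2_eq_1_iff)
    then show ?thesis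
      using weight_mult_one_plus_inner[OF assms(1) that that] by simp
  qed
  then have "sum p S = card S / 2"
    by (simp add: sum.cong[of S S p "\<lambda>_. 1 / 2"])
  then show False
    using sum_weight assms by simp
qed

end

theorem lemma6p1:
  fixes M :: "'a measure" and \<tau> :: "'a \<Rightarrow> real ^ 'n"
  assumes "prob_space M"
    and "CARD('n) \<ge> 2"
    and "\<tau> \<in> borel_measurable M"
    and "finite (\<tau> ` space M)"
    and "card (\<tau> ` space M) = CARD('n) + 1"
    and "\<forall>v \<in> \<tau> ` space M. measure M {\<omega> \<in> space M. \<tau> \<omega> = v} > 0"
    and "\<forall>i. (\<integral>\<omega>. \<tau> \<omega> $ i \<partial>M) = 0"
    and "\<forall>i j. (\<integral>\<omega>. \<tau> \<omega> $ i * \<tau> \<omega> $ j \<partial>M) = (if i = j then 1 else 0)"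
  shows "\<exists>i j k. (\<integral>\<omega>. \<tau> \<omega> $ i * \<tau> \<omega> $ j * \<tau> \<omega> $ k \<partial>M) \<noteq> 0"
proof (rule ccontr)
  assume no_third: "\<not> ?thesis"
  define S where "S = \<tau> ` space M"
  define p where "p v = measure M {\<omega> \<in> space M. \<tau> \<omega> = v}" for v
  have expectation: "(\<integral>\<omega>. f (\<tau> \<omega>) \<partial>M) = (\<Sum>v\<in>S. p v * f v)" for f
    unfolding S_def p_def
    using assms(1,3,4) by (intro integral_finite_range prob_space.finite_measure)
  interpret isotropic_weights S p
  proof
    show "finite S" "v \<in> S \<Longrightarrow> p v > 0" for v
      using assms(4,6) by (auto simp: S_def p_def)
    show "sum p S = 1"
      using expectation[of "\<lambda>_. 1"] prob_space.prob_space[OF assms(1)] by simp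
    show "(\<Sum>v\<in>S. p v * (a \<bullet> v)) = 0" for a
      using assms(7) expectation[of "\<lambda>v. v $ i" for i]
      by (intro sum_mult_inner_cart_eq_zero) simp
    show "(\<Sum>v\<in>S. p v * (a \<bullet> v) * (b \<bullet> v)) = a \<bullet> b" for a b
      using assms(8) expectation[of "\<lambda>v. v $ i * v $ j" for i j]
      by (intro isotropic_cart) simp
  qed
  have "(\<Sum>v\<in>S. p v * (a \<bullet> v) ^ 3) = 0" for a
    using no_third expectation[of "\<lambda>v. v $ i * v $ j * v $ k" for i j k]
    by (intro third_moment_cart_eq_zero) simp
  then show False
    using exists_nonzero_third_moment assms(2,5) by (simp add: S_def)
qed

end
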